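(* Let $N\geq 2$ be an integer and let $s_m,\sigma_x,\sigma_r,R_M$ be positive constants. Let $(s_i^0)_{1\leq i\leq N}\in(\mathbb{R}_+^* )^N$ and let $(x_i,y_i,S_i,\gamma_i)_{1\leq i\leq N}\in(\mathbb{R}^2\times(\mathbb{R}_+^* )^2)^N$, with $\log(S_i/s_m)\leq R_M$ for all $i$. Write $\vec x_i=(x_i,y_i)$ and $$C(s_i,s_j,d)=\frac{\log(s_j/s_m)}{2R_M\left(1+\frac{d^2}{\sigma_x^2}\right)}\left(1+\tanh\left(\frac{1}{\sigma_r}\log\frac{s_j}{s_i}\right)\right).$$ Then the system $$s_i(0)=s_i^0,\qquad \frac{\mathrm{d}s_i(t)}{\mathrm{d}t}=\gamma_i s_i(t)\left(\log\left(\frac{S_i}{s_m}\right)\left(1-\frac{1}{N-1}\sum_{j\neq i}C(s_i(t),s_j(t),|\vec x_i-\vec x_j|)\right)-\log\left(\frac{s_i(t)}{s_m}\right)\right),\quad 1\leq i\leq N,\ t\in\mathbb{R}_+,$$ has a unique solution $t\mapsto (s_i(t))_{1\leq i\leq N}$ defined on all of $\mathbb{R}_+$, and it takes positive values: $s_i(t)>0$ for all $t\in\mathbb{R}_+$ and all $i$.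
   Context: $|\vec x_i-\vec x_j|$ denotes the Euclidean distance in $\mathbb{R}^2$. *)

theory Defs
  imports "HOL-Analysis.Analysis"
begin

definition interC :: "real \<Rightarrow> real \<Rightarrow> real \<Rightarrow> real \<Rightarrow> real \<Rightarrow> real \<Rightarrow> real \<Rightarrow> real" where
  "interC s_m \<sigma>_x \<sigma>_r R_M si sj d =
     ln (sj / s_m) / (2 * R_M * (1 + d\<^sup>2 / \<sigma>_x\<^sup>2)) * (1 + tanh ((1 / \<sigma>_r) * ln (sj / si)))"

text \<open>Right-hand side of the equation for s_i; indices range over {0..<N},
  the point of index i is (x i, y i) and Euclidean distance is the product metric on real * real.\<close>
definition rhs :: "nat \<Rightarrow> real \<Rightarrow> real \<Rightarrow> real \<Rightarrow> real \<Rightarrow> (nat \<Rightarrow> real) \<Rightarrow> (nat \<Rightarrow> real)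
      \<Rightarrow> (nat \<Rightarrow> real) \<Rightarrow> (nat \<Rightarrow> real) \<Rightarrow> (nat \<Rightarrow> real) \<Rightarrow> nat \<Rightarrow> real" where
  "rhs N s_m \<sigma>_x \<sigma>_r R_M x y S \<gamma> s i =
     \<gamma> i * s i * (ln (S i / s_m) *
        (1 - (1 / real (N - 1)) *
             (\<Sum>j\<in>{..<N} - {i}. interC s_m \<sigma>_x \<sigma>_r R_M (s i) (s j) (dist (x i, y i) (x j, y j))))
      - ln (s i / s_m))"

definition is_solution :: "nat \<Rightarrow> real \<Rightarrow> real \<Rightarrow> real \<Rightarrow> real \<Rightarrow> (nat \<Rightarrow> real) \<Rightarrow> (nat \<Rightarrow> real)
      \<Rightarrow> (nat \<Rightarrow> real) \<Rightarrow> (nat \<Rightarrow> real) \<Rightarrow> (nat \<Rightarrow> real) \<Rightarrow> (nat \<Rightarrow> real \<Rightarrow> real) \<Rightarrow> bool" where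
  "is_solution N s_m \<sigma>_x \<sigma>_r R_M x y S \<gamma> s0 s \<longleftrightarrow>
     (\<forall>i<N. s i 0 = s0 i) \<and>
     (\<forall>i<N. \<forall>t\<ge>0. (s i has_real_derivative
          rhs N s_m \<sigma>_x \<sigma>_r R_M x y S \<gamma> (\<lambda>j. s j t) i) (at t within {0..}))"

end

theory Submission
  imports Defs
begin

(* In the variables u_i = ln (s_i / s_m) the system reads
     u_i' = gamma_i (a_i (1 - c sum_{j ~= i} w_ij u_j (1 + tanh (k (u_j - u_i)))) - u_i),
   whose right-hand side is Lipschitz on bounded sets and grows at most affinely. By Gronwall's
   inequality every solution obeys an exponential a priori bound, so Picard iteration for the field
   clipped beyond that bound gives a global solution u, and s_i = s_m exp u_i is a positive solution
   of the original system. Another solution agrees with it (Gronwall again, for the logarithms) as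
   long as it stays positive, and by continuity it can never be the first to reach zero. *)

section \<open>Gronwall estimates\<close>

lemma DERIV_le_mult_imp_le_exp:
  fixes V V' :: "real \<Rightarrow> real"
  assumes "0 \<le> t"
    and deriv: "\<And>x. x \<in> {0..t} \<Longrightarrow> (V has_real_derivative V' x) (at x within {0..t})"
    and le: "\<And>x. x \<in> {0..t} \<Longrightarrow> V' x \<le> K * V x"
  shows "V t \<le> V 0 * exp (K * t)"
proof -
  define g where "g x = exp (- K * x) * V x" for x
  define g' where "g' x = exp (- K * x) * (V' x - K * V x)" for x
  have "(g has_real_derivative g' x) (at x within {0..t})" if "x \<in> {0..t}" for x
    unfolding g_def g'_def
    by (rule derivative_eq_intros deriv[OF that] refl | simp add: algebra_simps)+
  then obtain \<xi> where "\<xi> \<in> {0..t}" "g t - g 0 = g' \<xi> * t"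
    using mvt_very_simple[OF \<open>0 \<le> t\<close>, of g "\<lambda>x. (*) (g' x)"]
    by (auto simp: has_field_derivative_def)
  moreover have "g' \<xi> * t \<le> 0"
    using \<open>0 \<le> t\<close> le[OF \<open>\<xi> \<in> {0..t}\<close>] by (simp add: g'_def mult_nonpos_nonneg mult_nonneg_nonpos)
  ultimately have "exp (- K * t) * V t \<le> V 0"
    by (simp add: g_def)
  then show ?thesis
    by (simp add: exp_minus field_simps)
qed

(* sqrt (eps + v^2) is a differentiable substitute for the absolute value. *)
lemma sum_sqrt_le_exp_if_deriv_bound:
  fixes v d :: "nat \<Rightarrow> real \<Rightarrow> real"
  assumes "\<epsilon> > 0" and "t \<in> {0..T}"
    and deriv: "\<And>j \<tau>. j < N \<Longrightarrow> \<tau> \<in> {0..T} \<Longrightarrow> (v j has_real_derivative d j \<tau>) (at \<tau> within {0..T})"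
    and bound: "\<And>\<tau>. \<tau> \<in> {0..T} \<Longrightarrow> (\<Sum>j<N. \<bar>d j \<tau>\<bar>) \<le> K * (\<Sum>j<N. sqrt (\<epsilon> + (v j \<tau>)\<^sup>2))"
  shows "(\<Sum>j<N. sqrt (\<epsilon> + (v j t)\<^sup>2)) \<le> (\<Sum>j<N. sqrt (\<epsilon> + (v j 0)\<^sup>2)) * exp (K * t)"
proof (rule DERIV_le_mult_imp_le_exp)
  have pos: "sqrt (\<epsilon> + (v j \<tau>)\<^sup>2) > 0" for j \<tau>
    using \<open>\<epsilon> > 0\<close> by (simp add: add_pos_nonneg)
  define V' where "V' \<tau> = (\<Sum>j<N. v j \<tau> * d j \<tau> / sqrt (\<epsilon> + (v j \<tau>)\<^sup>2))" for \<tau>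
  fix \<tau> assume "\<tau> \<in> {0..t}"
  then have "\<tau> \<in> {0..T}"
    using \<open>t \<in> {0..T}\<close> by auto
  have "((\<lambda>\<tau>. sqrt (\<epsilon> + (v j \<tau>)\<^sup>2)) has_real_derivative v j \<tau> * d j \<tau> / sqrt (\<epsilon> + (v j \<tau>)\<^sup>2))
      (at \<tau> within {0..t})" if "j < N" for j
    using has_field_derivative_subset[OF deriv[OF that \<open>\<tau> \<in> {0..T}\<close>], of "{0..t}"] \<open>t \<in> {0..T}\<close> pos[of j \<tau>]
    by (auto intro!: derivative_eq_intros simp: power2_eq_square field_simps)
  then show "((\<lambda>\<tau>. \<Sum>j<N. sqrt (\<epsilon> + (v j \<tau>)\<^sup>2)) has_real_derivative V' \<tau>) (at \<tau> within {0..t})"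
    unfolding V'_def by (intro DERIV_sum) auto
  have "v j \<tau> * d j \<tau> / sqrt (\<epsilon> + (v j \<tau>)\<^sup>2) \<le> \<bar>d j \<tau>\<bar>" for j
  proof -
    have "v j \<tau> * d j \<tau> \<le> \<bar>v j \<tau>\<bar> * \<bar>d j \<tau>\<bar>"
      by (simp add: abs_mult[symmetric])
    also have "\<dots> \<le> sqrt (\<epsilon> + (v j \<tau>)\<^sup>2) * \<bar>d j \<tau>\<bar>"
      using \<open>\<epsilon> > 0\<close> by (intro mult_right_mono) (auto intro: real_le_rsqrt)
    finally show ?thesis
      using pos[of j \<tau>] by (simp add: divide_le_eq mult.commute)
  qed
  then have "V' \<tau> \<le> (\<Sum>j<N. \<bar>d j \<tau>\<bar>)"
    unfolding V'_def by (intro sum_mono)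
  also have "\<dots> \<le> K * (\<Sum>j<N. sqrt (\<epsilon> + (v j \<tau>)\<^sup>2))"
    using bound \<open>\<tau> \<in> {0..T}\<close> .
  finally show "V' \<tau> \<le> K * (\<Sum>j<N. sqrt (\<epsilon> + (v j \<tau>)\<^sup>2))" .
qed (use \<open>t \<in> {0..T}\<close> in auto)

lemma sum_abs_le_exp_if_deriv_bound:
  fixes v d :: "nat \<Rightarrow> real \<Rightarrow> real"
  assumes "K \<ge> 0" and "t \<in> {0..T}"
    and deriv: "\<And>j \<tau>. j < N \<Longrightarrow> \<tau> \<in> {0..T} \<Longrightarrow> (v j has_real_derivative d j \<tau>) (at \<tau> within {0..T})"
    and bound: "\<And>\<tau>. \<tau> \<in> {0..T} \<Longrightarrow> (\<Sum>j<N. \<bar>d j \<tau>\<bar>) \<le> K * (\<Sum>j<N. \<bar>v j \<tau>\<bar>)"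
  shows "(\<Sum>j<N. \<bar>v j t\<bar>) \<le> (\<Sum>j<N. \<bar>v j 0\<bar>) * exp (K * t)"
proof (rule tendsto_le[OF trivial_limit_at_right_real])
  show "((\<lambda>\<epsilon>. (\<Sum>j<N. sqrt (\<epsilon> + (v j 0)\<^sup>2)) * exp (K * t)) \<longlongrightarrow> (\<Sum>j<N. \<bar>v j 0\<bar>) * exp (K * t))
      (at_right 0)"
    by (rule tendsto_eq_intros refl | simp)+
  have "(\<Sum>j<N. \<bar>v j t\<bar>) \<le> (\<Sum>j<N. sqrt (\<epsilon> + (v j 0)\<^sup>2)) * exp (K * t)" if "\<epsilon> > 0" for \<epsilon>
  proof -
    have "(\<Sum>j<N. \<bar>v j t\<bar>) \<le> (\<Sum>j<N. sqrt (\<epsilon> + (v j t)\<^sup>2))"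
      using that by (intro sum_mono real_le_rsqrt) auto
    also have "\<dots> \<le> (\<Sum>j<N. sqrt (\<epsilon> + (v j 0)\<^sup>2)) * exp (K * t)"
    proof (rule sum_sqrt_le_exp_if_deriv_bound[OF that \<open>t \<in> {0..T}\<close> deriv])
      fix \<tau> assume "\<tau> \<in> {0..T}"
      have "(\<Sum>j<N. \<bar>v j \<tau>\<bar>) \<le> (\<Sum>j<N. sqrt (\<epsilon> + (v j \<tau>)\<^sup>2))"
        using that by (intro sum_mono real_le_rsqrt) auto
      then show "(\<Sum>j<N. \<bar>d j \<tau>\<bar>) \<le> K * (\<Sum>j<N. sqrt (\<epsilon> + (v j \<tau>)\<^sup>2))"
        using bound[OF \<open>\<tau> \<in> {0..T}\<close>] \<open>K \<ge> 0\<close> by (meson mult_left_mono order_trans)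
    qed
    finally show ?thesis .
  qed
  then show "\<forall>\<^sub>F \<epsilon> in at_right 0. (\<Sum>j<N. \<bar>v j t\<bar>) \<le> (\<Sum>j<N. sqrt (\<epsilon> + (v j 0)\<^sup>2)) * exp (K * t)"
    by (rule eventually_mono[OF eventually_at_right_less])
qed simp

section \<open>Picard iteration\<close>

lemma sum_abs_integral_le:
  fixes g :: "nat \<Rightarrow> real \<Rightarrow> real" and h :: "real \<Rightarrow> real"
  assumes "\<And>j. j < N \<Longrightarrow> continuous_on {0..t} (g j)" and "continuous_on {0..t} h"
    and "\<And>\<tau>. \<tau> \<in> {0..t} \<Longrightarrow> (\<Sum>j<N. \<bar>g j \<tau>\<bar>) \<le> h \<tau>"
  shows "(\<Sum>j<N. \<bar>integral {0..t} (g j)\<bar>) \<le> integral {0..t} h"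
proof -
  have abs_integrable: "(\<lambda>\<tau>. \<bar>g j \<tau>\<bar>) integrable_on {0..t}" if "j < N" for j
    using assms(1)[OF that] by (intro integrable_continuous_real continuous_intros)
  have "(\<Sum>j<N. \<bar>integral {0..t} (g j)\<bar>) \<le> (\<Sum>j<N. integral {0..t} (\<lambda>\<tau>. \<bar>g j \<tau>\<bar>))"
  proof (rule sum_mono)
    fix j assume "j \<in> {..<N}"
    then show "\<bar>integral {0..t} (g j)\<bar> \<le> integral {0..t} (\<lambda>\<tau>. \<bar>g j \<tau>\<bar>)"
      using integral_norm_bound_integral[OF integrable_continuous_real[OF assms(1)] abs_integrable]
      by auto
  qed
  also have "\<dots> = integral {0..t} (\<lambda>\<tau>. \<Sum>j<N. \<bar>g j \<tau>\<bar>)"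
    using abs_integrable by (intro integral_sum[symmetric]) auto
  also have "\<dots> \<le> integral {0..t} h"
  proof (rule integral_le)
    show "(\<lambda>\<tau>. \<Sum>j<N. \<bar>g j \<tau>\<bar>) integrable_on {0..t}"
      using abs_integrable by (intro integrable_sum) auto
  qed (use assms(2,3) integrable_continuous_real in auto)
  finally show ?thesis .
qed

lemma integral_power_from_0:
  fixes t :: real
  assumes "0 \<le> t"
  shows "integral {0..t} (\<lambda>\<tau>. \<tau> ^ n) = t ^ Suc n / Suc n"
proof -
  have "((\<lambda>\<tau>. \<tau> ^ Suc n / Suc n) has_real_derivative x ^ n) (at x within {0..t})" for x
    using DERIV_cdivide[OF DERIV_pow[of "Suc n" x "{0..t}"], of "Suc n"]
    by (simp del: of_nat_Suc power_Suc)
  then have "((\<lambda>\<tau>. \<tau> ^ n) has_integral t ^ Suc n / Suc n - 0 ^ Suc n / Suc n) {0..t}"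
    by (intro fundamental_theorem_of_calculus assms)
      (simp add: has_real_derivative_iff_has_vector_derivative[symmetric])
  then show ?thesis
    by (simp add: integral_unique)
qed

primrec picard_iterate ::
    "(real \<Rightarrow> (nat \<Rightarrow> real) \<Rightarrow> nat \<Rightarrow> real) \<Rightarrow> (nat \<Rightarrow> real) \<Rightarrow> nat \<Rightarrow> nat \<Rightarrow> real \<Rightarrow> real" where
  "picard_iterate F u0 0 = (\<lambda>i t. u0 i)"
| "picard_iterate F u0 (Suc k) =
     (\<lambda>i t. u0 i + integral {0..t} (\<lambda>\<tau>. F \<tau> (\<lambda>j. picard_iterate F u0 k j \<tau>) i))"

definition picard_limit ::
    "(real \<Rightarrow> (nat \<Rightarrow> real) \<Rightarrow> nat \<Rightarrow> real) \<Rightarrow> (nat \<Rightarrow> real) \<Rightarrow> nat \<Rightarrow> real \<Rightarrow> real" where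
  "picard_limit F u0 i t = u0 i + (\<Sum>k. picard_iterate F u0 (Suc k) i t - picard_iterate F u0 k i t)"

locale picard_interval =
  fixes N :: nat and F :: "real \<Rightarrow> (nat \<Rightarrow> real) \<Rightarrow> nat \<Rightarrow> real" and u0 :: "nat \<Rightarrow> real"
    and T L M :: real
  assumes T_nonneg: "0 \<le> T" and L_nonneg: "0 \<le> L"
    and continuous_along: "\<And>P i. i < N \<Longrightarrow> (\<And>j. j < N \<Longrightarrow> continuous_on {0..T} (P j)) \<Longrightarrow>
      continuous_on {0..T} (\<lambda>t. F t (\<lambda>j. P j t) i)"
    and lipschitz: "\<And>t u v. t \<in> {0..T} \<Longrightarrow>
      (\<Sum>i<N. \<bar>F t u i - F t v i\<bar>) \<le> L * (\<Sum>j<N. \<bar>u j - v j\<bar>)"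
    and bounded: "\<And>t u. t \<in> {0..T} \<Longrightarrow> (\<Sum>i<N. \<bar>F t u i\<bar>) \<le> M"
begin

abbreviation "P \<equiv> picard_iterate F u0"
abbreviation "U \<equiv> picard_limit F u0"

lemma M_nonneg: "0 \<le> M"
proof -
  have "0 \<le> (\<Sum>i<N. \<bar>F 0 u0 i\<bar>)"
    by (simp add: sum_nonneg)
  also have "\<dots> \<le> M"
    using bounded[of 0 u0] T_nonneg by auto
  finally show ?thesis .
qed

lemma continuous_on_picard_iterate: "j < N \<Longrightarrow> continuous_on {0..T} (P k j)"
proof (induction k arbitrary: j)
  case (Suc k)
  have "continuous_on {0..T} (\<lambda>t. integral {0..t} (\<lambda>\<tau>. F \<tau> (\<lambda>i. P k i \<tau>) j))"
    by (intro indefinite_integral_continuous_1 integrable_continuous_real continuous_along Suc)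
  then show ?case
    by (simp add: continuous_on_add)
qed simp

lemma continuous_on_along_picard_iterate:
  "i < N \<Longrightarrow> t \<le> T \<Longrightarrow> continuous_on {0..t} (\<lambda>\<tau>. F \<tau> (\<lambda>j. P k j \<tau>) i)"
  by (rule continuous_on_subset[OF continuous_along[OF _ continuous_on_picard_iterate]]) auto

lemma picard_iterate_Suc_diff:
  assumes "j < N" and "t \<in> {0..T}"
  shows "P (Suc (Suc k)) j t - P (Suc k) j t
    = integral {0..t} (\<lambda>\<tau>. F \<tau> (\<lambda>i. P (Suc k) i \<tau>) j - F \<tau> (\<lambda>i. P k i \<tau>) j)"
proof -
  have "P (Suc (Suc k)) j t - P (Suc k) j t
      = integral {0..t} (\<lambda>\<tau>. F \<tau> (\<lambda>i. P (Suc k) i \<tau>) j) - integral {0..t} (\<lambda>\<tau>. F \<tau> (\<lambda>i. P k i \<tau>) j)"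
    by (simp only: picard_iterate.simps(2))
  also have "\<dots> = integral {0..t} (\<lambda>\<tau>. F \<tau> (\<lambda>i. P (Suc k) i \<tau>) j - F \<tau> (\<lambda>i. P k i \<tau>) j)"
    using assms
    by (intro integral_diff[symmetric] integrable_continuous_real continuous_on_along_picard_iterate) auto
  finally show ?thesis .
qed

lemma picard_iterate_step_bound:
  "t \<in> {0..T} \<Longrightarrow> (\<Sum>j<N. \<bar>P (Suc k) j t - P k j t\<bar>) \<le> M * L ^ k * t ^ Suc k / fact (Suc k)"
proof (induction k arbitrary: t)
  case 0
  have "(\<Sum>j<N. \<bar>P (Suc 0) j t - P 0 j t\<bar>) = (\<Sum>j<N. \<bar>integral {0..t} (\<lambda>\<tau>. F \<tau> (\<lambda>i. P 0 i \<tau>) j)\<bar>)"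
    by simp
  also have "\<dots> \<le> integral {0..t} (\<lambda>\<tau>. M)"
    using 0 by (intro sum_abs_integral_le continuous_on_along_picard_iterate bounded) auto
  finally show ?case
    using 0 by (simp add: mult.commute)
next
  case (Suc k)
  let ?G = "\<lambda>k j \<tau>. F \<tau> (\<lambda>i. P k i \<tau>) j"
  have "(\<Sum>j<N. \<bar>P (Suc (Suc k)) j t - P (Suc k) j t\<bar>)
      = (\<Sum>j<N. \<bar>integral {0..t} (\<lambda>\<tau>. ?G (Suc k) j \<tau> - ?G k j \<tau>)\<bar>)"
    using picard_iterate_Suc_diff[OF _ Suc.prems] by (intro sum.cong) auto
  also have "\<dots> \<le> integral {0..t} (\<lambda>\<tau>. L * (M * L ^ k / fact (Suc k)) * \<tau> ^ Suc k)"
  proof (rule sum_abs_integral_le)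
    fix \<tau> assume "\<tau> \<in> {0..t}"
    then have "\<tau> \<in> {0..T}"
      using Suc.prems by auto
    have "(\<Sum>j<N. \<bar>?G (Suc k) j \<tau> - ?G k j \<tau>\<bar>) \<le> L * (\<Sum>j<N. \<bar>P (Suc k) j \<tau> - P k j \<tau>\<bar>)"
      using lipschitz[OF \<open>\<tau> \<in> {0..T}\<close>] .
    also have "\<dots> \<le> L * (M * L ^ k * \<tau> ^ Suc k / fact (Suc k))"
      using Suc.IH[OF \<open>\<tau> \<in> {0..T}\<close>] L_nonneg by (rule mult_left_mono)
    finally show "(\<Sum>j<N. \<bar>?G (Suc k) j \<tau> - ?G k j \<tau>\<bar>) \<le> L * (M * L ^ k / fact (Suc k)) * \<tau> ^ Suc k"
      by simp
  next
    fix j assume "j < N"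
    then show "continuous_on {0..t} (\<lambda>\<tau>. ?G (Suc k) j \<tau> - ?G k j \<tau>)"
      using Suc.prems by (intro continuous_on_diff continuous_on_along_picard_iterate) auto
  qed (intro continuous_intros)
  also have "\<dots> = L * (M * L ^ k / fact (Suc k)) * (t ^ Suc (Suc k) / Suc (Suc k))"
    using integral_power_from_0[of t "Suc k"] Suc.prems by simp
  also have "\<dots> = M * L ^ Suc k * t ^ Suc (Suc k) / fact (Suc (Suc k))"
    by (simp add: field_simps del: of_nat_Suc)
  finally show ?case .
qed

lemma picard_iterate_step_le:
  assumes "j < N" and "t \<in> {0..T}"
  shows "\<bar>P (Suc k) j t - P k j t\<bar> \<le> M * T * (inverse (fact k) * (L * T) ^ k)"
proof -
  have "\<bar>P (Suc k) j t - P k j t\<bar> \<le> (\<Sum>j<N. \<bar>P (Suc k) j t - P k j t\<bar>)"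
    using assms(1) by (intro member_le_sum) auto
  also have "\<dots> \<le> M * L ^ k * t ^ Suc k / fact (Suc k)"
    using picard_iterate_step_bound[OF assms(2)] .
  also have "\<dots> \<le> M * L ^ k * T ^ Suc k / fact k"
    using assms(2) M_nonneg L_nonneg
    by (intro frac_le mult_left_mono power_mono fact_mono) auto
  also have "\<dots> = M * T * (inverse (fact k) * (L * T) ^ k)"
    by (simp add: field_simps)
  finally show ?thesis .
qed

lemma uniform_limit_picard_iterate:
  assumes "j < N"
  shows "uniform_limit {0..T} (\<lambda>k. P k j) (U j) sequentially"
proof -
  have "uniform_limit {0..T} (\<lambda>k t. \<Sum>m<k. P (Suc m) j t - P m j t)
      (\<lambda>t. \<Sum>m. P (Suc m) j t - P m j t) sequentially"
    using picard_iterate_step_le[OF assms]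
    by (intro Weierstrass_m_test[where M = "\<lambda>k. M * T * (inverse (fact k) * (L * T) ^ k)"]
        summable_mult summable_exp) auto
  then have "uniform_limit {0..T} (\<lambda>k t. u0 j + (\<Sum>m<k. P (Suc m) j t - P m j t)) (U j) sequentially"
    unfolding picard_limit_def by (intro uniform_limit_intros)
  moreover have "u0 j + (\<Sum>m<k. P (Suc m) j t - P m j t) = P k j t" for k t
    using sum_lessThan_telescope[of "\<lambda>m. P m j t" k] by simp
  ultimately show ?thesis
    by simp
qed

lemma continuous_on_picard_limit: "j < N \<Longrightarrow> continuous_on {0..T} (U j)"
  by (intro uniform_limit_theorem[OF _ uniform_limit_picard_iterate] always_eventually
      continuous_on_picard_iterate allI) auto

lemma picard_iterate_tendsto: "i < N \<Longrightarrow> \<tau> \<in> {0..T} \<Longrightarrow> (\<lambda>k. P k i \<tau>) \<longlonglongrightarrow> U i \<tau>"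
  by (rule tendsto_uniform_limitI[OF uniform_limit_picard_iterate])

lemma picard_iterate_field_tendsto:
  assumes "j < N" and "\<tau> \<in> {0..T}"
  shows "(\<lambda>k. F \<tau> (\<lambda>i. P k i \<tau>) j) \<longlonglongrightarrow> F \<tau> (\<lambda>i. U i \<tau>) j"
proof -
  have dist_le: "norm (F \<tau> (\<lambda>i. P k i \<tau>) j - F \<tau> (\<lambda>i. U i \<tau>) j) \<le> L * (\<Sum>i<N. \<bar>P k i \<tau> - U i \<tau>\<bar>)"
    for k
  proof -
    have "\<bar>F \<tau> (\<lambda>i. P k i \<tau>) j - F \<tau> (\<lambda>i. U i \<tau>) j\<bar>
        \<le> (\<Sum>j<N. \<bar>F \<tau> (\<lambda>i. P k i \<tau>) j - F \<tau> (\<lambda>i. U i \<tau>) j\<bar>)"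
      using assms(1) by (intro member_le_sum) auto
    also have "\<dots> \<le> L * (\<Sum>i<N. \<bar>P k i \<tau> - U i \<tau>\<bar>)"
      using lipschitz[OF assms(2)] .
    finally show ?thesis
      by simp
  qed
  have "(\<lambda>k. L * (\<Sum>i<N. \<bar>P k i \<tau> - U i \<tau>\<bar>)) \<longlonglongrightarrow> 0"
    using picard_iterate_tendsto assms(2)
    by (auto intro!: tendsto_mult_right_zero tendsto_null_sum tendsto_rabs_zero simp: LIM_zero_iff)
  then have "(\<lambda>k. F \<tau> (\<lambda>i. P k i \<tau>) j - F \<tau> (\<lambda>i. U i \<tau>) j) \<longlonglongrightarrow> 0"
    by (rule Lim_null_comparison[rotated]) (intro always_eventually allI dist_le)
  then show ?thesis
    by (rule LIM_zero_cancel)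
qed

lemma integral_picard_iterate_field_tendsto:
  assumes "j < N" and "t \<in> {0..T}"
  shows "(\<lambda>k. integral {0..t} (\<lambda>\<tau>. F \<tau> (\<lambda>i. P k i \<tau>) j))
    \<longlonglongrightarrow> integral {0..t} (\<lambda>\<tau>. F \<tau> (\<lambda>i. U i \<tau>) j)"
proof (rule dominated_convergence[where h = "\<lambda>_. M"])
  fix k \<tau> assume "\<tau> \<in> {0..t}"
  then have "\<tau> \<in> {0..T}"
    using assms(2) by auto
  have "norm (F \<tau> (\<lambda>i. P k i \<tau>) j) = \<bar>F \<tau> (\<lambda>i. P k i \<tau>) j\<bar>"
    by simp
  also have "\<dots> \<le> (\<Sum>j<N. \<bar>F \<tau> (\<lambda>i. P k i \<tau>) j\<bar>)"
    using assms(1) by (intro member_le_sum) auto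
  also have "\<dots> \<le> M"
    using bounded[OF \<open>\<tau> \<in> {0..T}\<close>] .
  finally show "norm (F \<tau> (\<lambda>i. P k i \<tau>) j) \<le> M" .
next
  fix k
  show "(\<lambda>\<tau>. F \<tau> (\<lambda>i. P k i \<tau>) j) integrable_on {0..t}"
    using assms by (intro integrable_continuous_real continuous_on_along_picard_iterate) auto
qed (use assms picard_iterate_field_tendsto in auto)

lemma picard_limit_integral_eq:
  assumes "j < N" and "t \<in> {0..T}"
  shows "U j t = u0 j + integral {0..t} (\<lambda>\<tau>. F \<tau> (\<lambda>i. U i \<tau>) j)"
proof (rule LIMSEQ_unique)
  show "(\<lambda>k. P (Suc k) j t) \<longlonglongrightarrow> U j t"
    using LIMSEQ_Suc[OF picard_iterate_tendsto[OF assms]] .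
  show "(\<lambda>k. P (Suc k) j t) \<longlonglongrightarrow> u0 j + integral {0..t} (\<lambda>\<tau>. F \<tau> (\<lambda>i. U i \<tau>) j)"
    using integral_picard_iterate_field_tendsto[OF assms] by (auto intro: tendsto_add)
qed

lemma picard_limit_has_derivative:
  assumes "i < N" and "t \<in> {0..T}"
  shows "(U i has_real_derivative F t (\<lambda>j. U j t) i) (at t within {0..T})"
proof -
  let ?G = "\<lambda>\<tau>. F \<tau> (\<lambda>j. U j \<tau>) i"
  have "continuous_on {0..T} ?G"
    using assms(1) by (intro continuous_along continuous_on_picard_limit)
  then have "((\<lambda>s. u0 i + integral {0..s} ?G) has_real_derivative ?G t) (at t within {0..T})"
    using assms(2) by (auto intro!: derivative_eq_intros integral_has_real_derivative)
  then show ?thesis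
    by (rule has_field_derivative_transform_within[where d = 1])
      (use assms picard_limit_integral_eq in auto)
qed

end

lemma picard_global_existence:
  fixes F :: "real \<Rightarrow> (nat \<Rightarrow> real) \<Rightarrow> nat \<Rightarrow> real" and u0 :: "nat \<Rightarrow> real"
  assumes continuous_along: "\<And>P T i. i < N \<Longrightarrow> (\<And>j. j < N \<Longrightarrow> continuous_on {0..T} (P j)) \<Longrightarrow>
      continuous_on {0..T} (\<lambda>t. F t (\<lambda>j. P j t) i)"
    and lipschitz: "\<And>T. \<exists>L\<ge>0. \<forall>t\<in>{0..T}. \<forall>u v.
      (\<Sum>i<N. \<bar>F t u i - F t v i\<bar>) \<le> L * (\<Sum>j<N. \<bar>u j - v j\<bar>)"
    and bounded: "\<And>T. \<exists>M. \<forall>t\<in>{0..T}. \<forall>u. (\<Sum>i<N. \<bar>F t u i\<bar>) \<le> M"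
  shows "\<exists>U. \<forall>i<N. U i 0 = u0 i \<and>
      (\<forall>t\<ge>0. (U i has_real_derivative F t (\<lambda>j. U j t) i) (at t within {0..}))"
proof (intro exI allI impI conjI)
  let ?U = "picard_limit F u0"
  have interval: "\<exists>L M. picard_interval N F T L M" if "0 \<le> T" for T
  proof -
    obtain L where "L \<ge> 0" "\<forall>t\<in>{0..T}. \<forall>u v. (\<Sum>i<N. \<bar>F t u i - F t v i\<bar>) \<le> L * (\<Sum>j<N. \<bar>u j - v j\<bar>)"
      using lipschitz by blast
    moreover obtain M where "\<forall>t\<in>{0..T}. \<forall>u. (\<Sum>i<N. \<bar>F t u i\<bar>) \<le> M"
      using bounded by blast
    ultimately show ?thesis
      using that continuous_along unfolding picard_interval_def by blast
  qed
  fix i assume "i < N"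
  obtain L0 M0 where "picard_interval N F 0 L0 M0"
    using interval by blast
  then interpret initial: picard_interval N F u0 0 L0 M0 .
  show "?U i 0 = u0 i"
    using initial.picard_limit_integral_eq[of i 0] \<open>i < N\<close> by simp
  fix t :: real assume "t \<ge> 0"
  obtain L M where "picard_interval N F (t + 1) L M"
    using interval \<open>t \<ge> 0\<close> by fastforce
  then interpret picard_interval N F u0 "t + 1" L M .
  have "(?U i has_real_derivative F t (\<lambda>j. ?U j t) i) (at t within {0..t + 1})"
    using \<open>i < N\<close> \<open>t \<ge> 0\<close> by (intro picard_limit_has_derivative) auto
  moreover have "at t within {0..t + 1} = at t within {0..}"
    by (rule at_within_nhd[where S = "{..<t + 1}"]) auto
  ultimately show "(?U i has_real_derivative F t (\<lambda>j. ?U j t) i) (at t within {0..})"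
    by simp
qed

section \<open>Systems with affine growth\<close>

lemma abs_le_exp_if_affine_growth:
  fixes v d :: "nat \<Rightarrow> real \<Rightarrow> real"
  assumes "A \<ge> 0" and "B \<ge> 0" and "j < N" and "0 \<le> t"
    and deriv: "\<And>j \<tau>. j < N \<Longrightarrow> \<tau> \<in> {0..t} \<Longrightarrow> (v j has_real_derivative d j \<tau>) (at \<tau> within {0..t})"
    and growth: "\<And>\<tau>. \<tau> \<in> {0..t} \<Longrightarrow> (\<Sum>j<N. \<bar>d j \<tau>\<bar>) \<le> A + B * (\<Sum>j<N. \<bar>v j \<tau>\<bar>)"
  shows "\<bar>v j t\<bar> \<le> (\<Sum>j<N. sqrt (1 + (v j 0)\<^sup>2)) * exp ((A + B) * t)"
proof -
  have "\<bar>v j t\<bar> \<le> sqrt (1 + (v j t)\<^sup>2)"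
    by (rule real_le_rsqrt) simp
  also have "\<dots> \<le> (\<Sum>j<N. sqrt (1 + (v j t)\<^sup>2))"
    using \<open>j < N\<close> by (intro member_le_sum) auto
  also have "\<dots> \<le> (\<Sum>j<N. sqrt (1 + (v j 0)\<^sup>2)) * exp ((A + B) * t)"
  proof (rule sum_sqrt_le_exp_if_deriv_bound[OF _ _ deriv])
    fix \<tau> assume "\<tau> \<in> {0..t}"
    let ?Q = "\<Sum>j<N. sqrt (1 + (v j \<tau>)\<^sup>2)"
    have "1 \<le> sqrt (1 + (v j \<tau>)\<^sup>2)"
      by simp
    also have "\<dots> \<le> ?Q"
      using \<open>j < N\<close> by (intro member_le_sum) auto
    finally have "A \<le> A * ?Q"
      using \<open>A \<ge> 0\<close> by (simp add: mult_le_cancel_left1)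
    moreover have "B * (\<Sum>j<N. \<bar>v j \<tau>\<bar>) \<le> B * ?Q"
      using \<open>B \<ge> 0\<close> by (intro mult_left_mono sum_mono real_le_rsqrt) auto
    ultimately show "(\<Sum>j<N. \<bar>d j \<tau>\<bar>) \<le> (A + B) * ?Q"
      using growth[OF \<open>\<tau> \<in> {0..t}\<close>] by (simp add: distrib_right)
  qed (use \<open>0 \<le> t\<close> in auto)
  finally show ?thesis .
qed

definition clip :: "real \<Rightarrow> real \<Rightarrow> real" where
  "clip r z = max (- r) (min r z)"

lemma abs_clip_le: "r \<ge> 0 \<Longrightarrow> \<bar>clip r z\<bar> \<le> r"
  unfolding clip_def by auto

lemma abs_clip_le_abs: "r \<ge> 0 \<Longrightarrow> \<bar>clip r z\<bar> \<le> \<bar>z\<bar>"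
  unfolding clip_def by auto

lemma clip_lipschitz: "r \<ge> 0 \<Longrightarrow> \<bar>clip r z - clip r z'\<bar> \<le> \<bar>z - z'\<bar>"
  unfolding clip_def by auto

lemma clip_eq: "\<bar>z\<bar> \<le> r \<Longrightarrow> clip r z = z"
  unfolding clip_def by auto

locale locally_lipschitz_system =
  fixes N :: nat and f :: "(nat \<Rightarrow> real) \<Rightarrow> nat \<Rightarrow> real"
  assumes locally_lipschitz: "\<And>R. R \<ge> 0 \<Longrightarrow> \<exists>L\<ge>0. \<forall>u v. (\<forall>j<N. \<bar>v j\<bar> \<le> R) \<longrightarrow>
    (\<Sum>i<N. \<bar>f u i - f v i\<bar>) \<le> L * (\<Sum>j<N. \<bar>u j - v j\<bar>)"
begin

lemma solution_unique:
  assumes U: "\<And>j t. j < N \<Longrightarrow> t \<in> {0..T} \<Longrightarrow> (U j has_real_derivative f (\<lambda>i. U i t) j) (at t within {0..T})"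
    and V: "\<And>j t. j < N \<Longrightarrow> t \<in> {0..T} \<Longrightarrow> (V j has_real_derivative f (\<lambda>i. V i t) j) (at t within {0..T})"
    and initial: "\<And>j. j < N \<Longrightarrow> U j 0 = V j 0"
    and "j < N" and "t \<in> {0..T}"
  shows "U j t = V j t"
proof -
  have V_cont: "continuous_on {0..T} (V j)" if "j < N" for j
    unfolding continuous_on_eq_continuous_within using V[OF that] DERIV_continuous by blast
  have "continuous_on {0..T} (\<lambda>t. \<Sum>j<N. \<bar>V j t\<bar>)"
    by (intro continuous_intros V_cont) simp
  then obtain t_max where "\<And>t. t \<in> {0..T} \<Longrightarrow> (\<Sum>j<N. \<bar>V j t\<bar>) \<le> (\<Sum>j<N. \<bar>V j t_max\<bar>)"
    using continuous_attains_sup[OF compact_Icc] \<open>t \<in> {0..T}\<close> by (metis empty_iff)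
  then have V_bound: "\<bar>V i \<tau>\<bar> \<le> (\<Sum>j<N. \<bar>V j t_max\<bar>)" if "i < N" "\<tau> \<in> {0..T}" for i \<tau>
    using member_le_sum[of i "{..<N}" "\<lambda>j. \<bar>V j \<tau>\<bar>"] that by fastforce
  obtain L where "L \<ge> 0" and L: "\<And>u v. (\<forall>j<N. \<bar>v j\<bar> \<le> (\<Sum>j<N. \<bar>V j t_max\<bar>)) \<Longrightarrow>
      (\<Sum>i<N. \<bar>f u i - f v i\<bar>) \<le> L * (\<Sum>j<N. \<bar>u j - v j\<bar>)"
    using locally_lipschitz[of "\<Sum>j<N. \<bar>V j t_max\<bar>"] by (auto simp: sum_nonneg)
  have "(\<Sum>j<N. \<bar>U j t - V j t\<bar>) \<le> (\<Sum>j<N. \<bar>U j 0 - V j 0\<bar>) * exp (L * t)"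
  proof (rule sum_abs_le_exp_if_deriv_bound[OF \<open>L \<ge> 0\<close> \<open>t \<in> {0..T}\<close>])
    fix j \<tau> assume "j < N" "\<tau> \<in> {0..T}"
    then show "((\<lambda>t. U j t - V j t) has_real_derivative f (\<lambda>i. U i \<tau>) j - f (\<lambda>i. V i \<tau>) j)
        (at \<tau> within {0..T})"
      by (intro DERIV_diff U V)
  next
    fix \<tau> assume "\<tau> \<in> {0..T}"
    then show "(\<Sum>j<N. \<bar>f (\<lambda>i. U i \<tau>) j - f (\<lambda>i. V i \<tau>) j\<bar>) \<le> L * (\<Sum>j<N. \<bar>U j \<tau> - V j \<tau>\<bar>)"
      using V_bound by (intro L) auto
  qed
  then have "(\<Sum>j<N. \<bar>U j t - V j t\<bar>) \<le> 0"
    using initial by simp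
  moreover have "\<bar>U j t - V j t\<bar> \<le> (\<Sum>j<N. \<bar>U j t - V j t\<bar>)"
    using \<open>j < N\<close> by (intro member_le_sum) auto
  ultimately show ?thesis
    by simp
qed

end

locale affine_growth_system = locally_lipschitz_system +
  fixes A B :: real
  assumes A_nonneg: "0 \<le> A" and B_nonneg: "0 \<le> B"
    and growth: "\<And>u. (\<Sum>i<N. \<bar>f u i\<bar>) \<le> A + B * (\<Sum>j<N. \<bar>u j\<bar>)"
    and continuous_along: "\<And>P (S :: real set) i. i < N \<Longrightarrow> (\<And>j. j < N \<Longrightarrow> continuous_on S (P j)) \<Longrightarrow>
      continuous_on S (\<lambda>t. f (\<lambda>j. P j t) i)"
    and cong: "\<And>u v i. i < N \<Longrightarrow> (\<And>j. j < N \<Longrightarrow> u j = v j) \<Longrightarrow> f u i = f v i"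
begin

(* Clipping the state beyond the a priori bound of abs_clipped_solution_le makes the field
   globally Lipschitz on every [0, T] without changing the solution. *)
definition radius :: "(nat \<Rightarrow> real) \<Rightarrow> real \<Rightarrow> real" where
  "radius u0 t = (\<Sum>j<N. sqrt (1 + (u0 j)\<^sup>2)) * exp ((A + B) * t) + 1"

definition clipped :: "(nat \<Rightarrow> real) \<Rightarrow> real \<Rightarrow> (nat \<Rightarrow> real) \<Rightarrow> nat \<Rightarrow> real" where
  "clipped u0 t u = f (\<lambda>j. clip (radius u0 t) (u j))"

lemma radius_nonneg: "0 \<le> radius u0 t"
  unfolding radius_def by (intro add_nonneg_nonneg mult_nonneg_nonneg sum_nonneg) auto

lemma abs_clip_radius_le:
  assumes "t \<in> {0..T}"
  shows "\<bar>clip (radius u0 t) z\<bar> \<le> radius u0 T"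
proof -
  have "(A + B) * t \<le> (A + B) * T"
    using assms A_nonneg B_nonneg by (intro mult_left_mono) auto
  then have "radius u0 t \<le> radius u0 T"
    unfolding radius_def by (intro add_right_mono mult_left_mono sum_nonneg) auto
  then show ?thesis
    using abs_clip_le[OF radius_nonneg] by (rule order_trans[rotated])
qed

lemma clipped_lipschitz:
  "\<exists>L\<ge>0. \<forall>t\<in>{0..T}. \<forall>u v. (\<Sum>i<N. \<bar>clipped u0 t u i - clipped u0 t v i\<bar>) \<le> L * (\<Sum>j<N. \<bar>u j - v j\<bar>)"
proof -
  obtain L where "L \<ge> 0" and L: "\<And>u v. (\<forall>j<N. \<bar>v j\<bar> \<le> radius u0 T) \<Longrightarrow>
      (\<Sum>i<N. \<bar>f u i - f v i\<bar>) \<le> L * (\<Sum>j<N. \<bar>u j - v j\<bar>)"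
    using locally_lipschitz[OF radius_nonneg] by blast
  have "(\<Sum>i<N. \<bar>clipped u0 t u i - clipped u0 t v i\<bar>) \<le> L * (\<Sum>j<N. \<bar>u j - v j\<bar>)"
    if "t \<in> {0..T}" for t u v
  proof -
    have "(\<Sum>i<N. \<bar>clipped u0 t u i - clipped u0 t v i\<bar>)
        \<le> L * (\<Sum>j<N. \<bar>clip (radius u0 t) (u j) - clip (radius u0 t) (v j)\<bar>)"
      unfolding clipped_def using abs_clip_radius_le[OF that] by (intro L) auto
    also have "\<dots> \<le> L * (\<Sum>j<N. \<bar>u j - v j\<bar>)"
      using \<open>L \<ge> 0\<close> clip_lipschitz[OF radius_nonneg] by (intro mult_left_mono sum_mono) auto
    finally show ?thesis .
  qed
  then show ?thesis
    using \<open>L \<ge> 0\<close> by blast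
qed

lemma clipped_bounded: "\<exists>M. \<forall>t\<in>{0..T}. \<forall>u. (\<Sum>i<N. \<bar>clipped u0 t u i\<bar>) \<le> M"
proof -
  have "(\<Sum>i<N. \<bar>clipped u0 t u i\<bar>) \<le> A + B * (\<Sum>j<N. radius u0 T)" if "t \<in> {0..T}" for t u
    unfolding clipped_def using growth order_trans B_nonneg abs_clip_radius_le[OF that]
    by (meson add_left_mono mult_left_mono sum_mono)
  then show ?thesis
    by blast
qed

lemma continuous_on_clipped:
  assumes "i < N" and "\<And>j. j < N \<Longrightarrow> continuous_on {0..T} (P j)"
  shows "continuous_on {0..T} (\<lambda>t. clipped u0 t (\<lambda>j. P j t) i)"
  unfolding clipped_def radius_def clip_def
  by (intro continuous_along[OF assms(1)] continuous_intros assms(2))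

lemma abs_clipped_solution_le:
  assumes U0: "\<And>i. i < N \<Longrightarrow> U i 0 = u0 i"
    and U: "\<And>i t. i < N \<Longrightarrow> t \<ge> 0 \<Longrightarrow>
      (U i has_real_derivative clipped u0 t (\<lambda>j. U j t) i) (at t within {0..})"
    and "j < N" and "t \<ge> 0"
  shows "\<bar>U j t\<bar> \<le> radius u0 t"
proof -
  have "\<bar>U j t\<bar> \<le> (\<Sum>j<N. sqrt (1 + (U j 0)\<^sup>2)) * exp ((A + B) * t)"
  proof (rule abs_le_exp_if_affine_growth[where d = "\<lambda>j \<tau>. clipped u0 \<tau> (\<lambda>j. U j \<tau>) j"])
    fix j \<tau> assume "j < N" "\<tau> \<in> {0..t}"
    then show "(U j has_real_derivative clipped u0 \<tau> (\<lambda>j. U j \<tau>) j) (at \<tau> within {0..t})"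
      by (intro has_field_derivative_subset[OF U]) auto
  next
    fix \<tau> :: real
    have "(\<Sum>j<N. \<bar>clipped u0 \<tau> (\<lambda>j. U j \<tau>) j\<bar>) \<le> A + B * (\<Sum>j<N. \<bar>clip (radius u0 \<tau>) (U j \<tau>)\<bar>)"
      unfolding clipped_def by (rule growth)
    also have "\<dots> \<le> A + B * (\<Sum>j<N. \<bar>U j \<tau>\<bar>)"
      using B_nonneg abs_clip_le_abs[OF radius_nonneg] by (intro add_left_mono mult_left_mono sum_mono) auto
    finally show "(\<Sum>j<N. \<bar>clipped u0 \<tau> (\<lambda>j. U j \<tau>) j\<bar>) \<le> A + B * (\<Sum>j<N. \<bar>U j \<tau>\<bar>)" .
  qed (use A_nonneg B_nonneg assms(3,4) in auto)
  then show ?thesis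
    unfolding radius_def using U0 by simp
qed

lemma solution_exists:
  "\<exists>U. \<forall>i<N. U i 0 = u0 i \<and> (\<forall>t\<ge>0. (U i has_real_derivative f (\<lambda>j. U j t) i) (at t within {0..}))"
proof -
  have "\<exists>U. \<forall>i<N. U i 0 = u0 i \<and>
      (\<forall>t\<ge>0. (U i has_real_derivative clipped u0 t (\<lambda>j. U j t) i) (at t within {0..}))"
    using continuous_on_clipped clipped_lipschitz clipped_bounded by (rule picard_global_existence)
  then obtain U where U0: "\<And>i. i < N \<Longrightarrow> U i 0 = u0 i"
    and U: "\<And>i t. i < N \<Longrightarrow> t \<ge> 0 \<Longrightarrow>
      (U i has_real_derivative clipped u0 t (\<lambda>j. U j t) i) (at t within {0..})"
    by blast
  show ?thesis
  proof (intro exI allI impI conjI)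
    fix i t assume "i < N" and "(t::real) \<ge> 0"
    have "clipped u0 t (\<lambda>j. U j t) i = f (\<lambda>j. U j t) i"
      unfolding clipped_def using \<open>i < N\<close> \<open>t \<ge> 0\<close> abs_clipped_solution_le[OF U0 U]
      by (intro cong clip_eq) auto
    then show "(U i has_real_derivative f (\<lambda>j. U j t) i) (at t within {0..})"
      using U[OF \<open>i < N\<close> \<open>t \<ge> 0\<close>] by simp
  qed (use U0 in auto)
qed

end

section \<open>The interaction field\<close>

lemma tanh_real_lipschitz: "\<bar>tanh a - tanh b\<bar> \<le> \<bar>a - b\<bar>" for a b :: real
proof -
  have "\<bar>tanh b - tanh a\<bar> \<le> b - a" if ab: "a < b" for a b :: real
  proof -
    have "(tanh has_real_derivative 1 - tanh x ^ 2) (at x)" for x :: real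
      using has_field_derivative_tanh[OF _ DERIV_ident, of x] by simp
    then obtain z where "tanh b - tanh a = (b - a) * (1 - tanh z ^ 2)"
      using MVT2[OF ab, of tanh "\<lambda>x. 1 - tanh x ^ 2"] by blast
    moreover have "0 \<le> 1 - tanh z ^ 2" "1 - tanh z ^ 2 \<le> 1"
      using tanh_real_bounds[of z] by (auto simp: abs_square_le_1)
    ultimately show ?thesis
      using ab by (simp add: abs_mult mult_left_le)
  qed
  then show ?thesis
    by (cases a b rule: linorder_cases) (auto simp: abs_minus_commute)
qed

definition interaction :: "real \<Rightarrow> real \<Rightarrow> real \<Rightarrow> real" where
  "interaction k p q = p * (1 + tanh (k * (p - q)))"

lemma abs_one_plus_tanh_le: "\<bar>1 + tanh x\<bar> \<le> 2" for x :: real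
  using tanh_real_bounds[of x] by auto

lemma abs_mult_one_plus_tanh_le: "\<bar>p * (1 + tanh x)\<bar> \<le> 2 * \<bar>p\<bar>" for p x :: real
  using mult_left_mono[OF abs_one_plus_tanh_le[of x], of "\<bar>p\<bar>"] by (simp add: abs_mult mult.commute)

lemma abs_interaction_le: "\<bar>interaction k p q\<bar> \<le> 2 * \<bar>p\<bar>"
  unfolding interaction_def by (rule abs_mult_one_plus_tanh_le)

lemma interaction_lipschitz:
  assumes "\<bar>p'\<bar> \<le> R"
  shows "\<bar>interaction k p q - interaction k p' q'\<bar> \<le> (2 + R * \<bar>k\<bar>) * \<bar>p - p'\<bar> + R * \<bar>k\<bar> * \<bar>q - q'\<bar>"
proof -
  have "\<bar>tanh (k * (p - q)) - tanh (k * (p' - q'))\<bar> \<le> \<bar>k * ((p - p') - (q - q'))\<bar>"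
    using tanh_real_lipschitz[of "k * (p - q)" "k * (p' - q')"] by (simp add: algebra_simps)
  also have "\<dots> \<le> \<bar>k\<bar> * (\<bar>p - p'\<bar> + \<bar>q - q'\<bar>)"
    unfolding abs_mult by (intro mult_left_mono abs_triangle_ineq4) simp
  finally have tanh_diff: "\<bar>tanh (k * (p - q)) - tanh (k * (p' - q'))\<bar> \<le> \<bar>k\<bar> * (\<bar>p - p'\<bar> + \<bar>q - q'\<bar>)" .
  have "\<bar>interaction k p q - interaction k p' q'\<bar>
      = \<bar>(p - p') * (1 + tanh (k * (p - q))) + p' * (tanh (k * (p - q)) - tanh (k * (p' - q')))\<bar>"
    unfolding interaction_def by (simp add: algebra_simps)
  also have "\<dots> \<le> \<bar>(p - p') * (1 + tanh (k * (p - q)))\<bar> + \<bar>p'\<bar> * \<bar>tanh (k * (p - q)) - tanh (k * (p' - q'))\<bar>"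
    by (metis abs_mult abs_triangle_ineq)
  also have "\<dots> \<le> 2 * \<bar>p - p'\<bar> + R * (\<bar>k\<bar> * (\<bar>p - p'\<bar> + \<bar>q - q'\<bar>))"
    using assms tanh_diff by (intro add_mono abs_mult_one_plus_tanh_le mult_mono) auto
  also have "\<dots> = (2 + R * \<bar>k\<bar>) * \<bar>p - p'\<bar> + R * \<bar>k\<bar> * \<bar>q - q'\<bar>"
    by (simp add: algebra_simps)
  finally show ?thesis .
qed

(* The right-hand side for u_i = ln (s_i / s_m): with c = 1 / (N - 1), k = 1 / sigma_r,
   a_i = ln (S_i / s_m), g = gamma and w_ij = 1 / (2 R_M (1 + d_ij^2 / sigma_x^2)), the term
   w_ij * interaction k u_j u_i equals C (s_i, s_j, d_ij). *)
definition log_rhs :: "nat \<Rightarrow> real \<Rightarrow> real \<Rightarrow> (nat \<Rightarrow> real) \<Rightarrow> (nat \<Rightarrow> real) \<Rightarrow> (nat \<Rightarrow> nat \<Rightarrow> real)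
    \<Rightarrow> (nat \<Rightarrow> real) \<Rightarrow> nat \<Rightarrow> real" where
  "log_rhs N c k g a w u i =
     g i * (a i * (1 - c * (\<Sum>j\<in>{..<N} - {i}. w i j * interaction k (u j) (u i))) - u i)"

lemma log_rhs_cong:
  "i < N \<Longrightarrow> (\<And>j. j < N \<Longrightarrow> u j = v j) \<Longrightarrow> log_rhs N c k g a w u i = log_rhs N c k g a w v i"
  unfolding log_rhs_def by (intro arg_cong2[where f = "(*)"] arg_cong2[where f = "(-)"] sum.cong) auto

lemma abs_interaction_sum_le:
  fixes w :: "nat \<Rightarrow> nat \<Rightarrow> real"
  assumes "\<And>j. \<bar>w i j\<bar> \<le> W"
  shows "\<bar>\<Sum>j\<in>{..<N} - {i}. w i j * interaction k (u j) (u i)\<bar> \<le> 2 * W * (\<Sum>j<N. \<bar>u j\<bar>)"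
proof -
  have "W \<ge> 0"
    using assms[of 0] by linarith
  have "\<bar>\<Sum>j\<in>{..<N} - {i}. w i j * interaction k (u j) (u i)\<bar>
      \<le> (\<Sum>j\<in>{..<N} - {i}. \<bar>w i j\<bar> * \<bar>interaction k (u j) (u i)\<bar>)"
    unfolding abs_mult[symmetric] by (rule sum_abs)
  also have "\<dots> \<le> (\<Sum>j\<in>{..<N} - {i}. W * (2 * \<bar>u j\<bar>))"
    using assms \<open>W \<ge> 0\<close> abs_interaction_le by (intro sum_mono mult_mono) auto
  also have "\<dots> \<le> (\<Sum>j<N. W * (2 * \<bar>u j\<bar>))"
    using \<open>W \<ge> 0\<close> by (intro sum_mono2) auto
  also have "\<dots> = 2 * W * (\<Sum>j<N. \<bar>u j\<bar>)"
    by (simp add: sum_distrib_left ac_simps)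
  finally show ?thesis .
qed

lemma interaction_sum_lipschitz:
  fixes w :: "nat \<Rightarrow> nat \<Rightarrow> real"
  assumes "\<And>j. \<bar>w i j\<bar> \<le> W" and "\<And>j. j < N \<Longrightarrow> \<bar>v j\<bar> \<le> R" and "i < N"
  shows "\<bar>(\<Sum>j\<in>{..<N} - {i}. w i j * interaction k (u j) (u i))
          - (\<Sum>j\<in>{..<N} - {i}. w i j * interaction k (v j) (v i))\<bar>
     \<le> W * (2 + R * \<bar>k\<bar> + N * R * \<bar>k\<bar>) * (\<Sum>j<N. \<bar>u j - v j\<bar>)"
proof -
  let ?S = "\<Sum>j<N. \<bar>u j - v j\<bar>"
  have "W \<ge> 0" and "R \<ge> 0"
    using assms(1)[of 0] assms(2)[OF \<open>i < N\<close>] by linarith+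
  have "\<bar>u i - v i\<bar> \<le> ?S"
    using \<open>i < N\<close> by (intro member_le_sum) auto
  have "\<bar>(\<Sum>j\<in>{..<N} - {i}. w i j * interaction k (u j) (u i))
          - (\<Sum>j\<in>{..<N} - {i}. w i j * interaction k (v j) (v i))\<bar>
      \<le> (\<Sum>j\<in>{..<N} - {i}. \<bar>w i j\<bar> * \<bar>interaction k (u j) (u i) - interaction k (v j) (v i)\<bar>)"
    unfolding sum_subtractf[symmetric] abs_mult[symmetric] right_diff_distrib[symmetric] by (rule sum_abs)
  also have "\<dots> \<le> (\<Sum>j<N. W * ((2 + R * \<bar>k\<bar>) * \<bar>u j - v j\<bar> + R * \<bar>k\<bar> * \<bar>u i - v i\<bar>))"
  proof -
    have "(\<Sum>j\<in>{..<N} - {i}. \<bar>w i j\<bar> * \<bar>interaction k (u j) (u i) - interaction k (v j) (v i)\<bar>)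
        \<le> (\<Sum>j\<in>{..<N} - {i}. W * ((2 + R * \<bar>k\<bar>) * \<bar>u j - v j\<bar> + R * \<bar>k\<bar> * \<bar>u i - v i\<bar>))"
      using assms(1,2) \<open>W \<ge> 0\<close> by (intro sum_mono mult_mono interaction_lipschitz) auto
    also have "\<dots> \<le> (\<Sum>j<N. W * ((2 + R * \<bar>k\<bar>) * \<bar>u j - v j\<bar> + R * \<bar>k\<bar> * \<bar>u i - v i\<bar>))"
      using \<open>W \<ge> 0\<close> \<open>R \<ge> 0\<close> by (intro sum_mono2) auto
    finally show ?thesis .
  qed
  also have "\<dots> = W * (2 + R * \<bar>k\<bar>) * ?S + N * (W * R * \<bar>k\<bar> * \<bar>u i - v i\<bar>)"
    by (simp add: sum.distrib sum_distrib_left algebra_simps)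
  also have "\<dots> \<le> W * (2 + R * \<bar>k\<bar>) * ?S + N * (W * R * \<bar>k\<bar> * ?S)"
    using \<open>W \<ge> 0\<close> \<open>R \<ge> 0\<close> \<open>\<bar>u i - v i\<bar> \<le> ?S\<close> by (intro add_left_mono mult_left_mono) auto
  also have "\<dots> = W * (2 + R * \<bar>k\<bar> + N * R * \<bar>k\<bar>) * ?S"
    by (simp add: algebra_simps)
  finally show ?thesis .
qed

lemma log_rhs_growth:
  fixes w :: "nat \<Rightarrow> nat \<Rightarrow> real"
  assumes "\<And>i j. \<bar>w i j\<bar> \<le> W"
  shows "(\<Sum>i<N. \<bar>log_rhs N c k g a w u i\<bar>)
    \<le> (\<Sum>i<N. \<bar>g i\<bar> * \<bar>a i\<bar>) + (\<Sum>i<N. \<bar>g i\<bar> * (2 * \<bar>a i\<bar> * \<bar>c\<bar> * W + 1)) * (\<Sum>j<N. \<bar>u j\<bar>)"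
proof -
  let ?S = "\<Sum>j<N. \<bar>u j\<bar>"
  have "\<bar>log_rhs N c k g a w u i\<bar> \<le> \<bar>g i\<bar> * \<bar>a i\<bar> + \<bar>g i\<bar> * (2 * \<bar>a i\<bar> * \<bar>c\<bar> * W + 1) * ?S"
    if "i < N" for i
  proof -
    let ?Z = "\<Sum>j\<in>{..<N} - {i}. w i j * interaction k (u j) (u i)"
    have "\<bar>c * ?Z\<bar> \<le> \<bar>c\<bar> * (2 * W * ?S)"
      unfolding abs_mult using assms by (intro mult_left_mono abs_interaction_sum_le) auto
    then have "\<bar>1 - c * ?Z\<bar> \<le> 1 + \<bar>c\<bar> * (2 * W * ?S)"
      using abs_triangle_ineq4[of 1 "c * ?Z"] by simp
    then have "\<bar>a i * (1 - c * ?Z)\<bar> \<le> \<bar>a i\<bar> * (1 + \<bar>c\<bar> * (2 * W * ?S))"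
      unfolding abs_mult[of "a i"] by (rule mult_left_mono) simp
    moreover have "\<bar>u i\<bar> \<le> ?S"
      using that by (intro member_le_sum) auto
    ultimately have "\<bar>a i * (1 - c * ?Z) - u i\<bar> \<le> \<bar>a i\<bar> * (1 + \<bar>c\<bar> * (2 * W * ?S)) + ?S"
      using abs_triangle_ineq4[of "a i * (1 - c * ?Z)" "u i"] by simp
    then have "\<bar>log_rhs N c k g a w u i\<bar> \<le> \<bar>g i\<bar> * (\<bar>a i\<bar> * (1 + \<bar>c\<bar> * (2 * W * ?S)) + ?S)"
      unfolding log_rhs_def abs_mult[of "g i"] by (intro mult_left_mono) auto
    then show ?thesis
      by (simp add: algebra_simps)
  qed
  then have "(\<Sum>i<N. \<bar>log_rhs N c k g a w u i\<bar>)
      \<le> (\<Sum>i<N. \<bar>g i\<bar> * \<bar>a i\<bar> + \<bar>g i\<bar> * (2 * \<bar>a i\<bar> * \<bar>c\<bar> * W + 1) * ?S)"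
    by (intro sum_mono) auto
  then show ?thesis
    by (simp add: sum.distrib sum_distrib_right)
qed

lemma log_rhs_lipschitz:
  fixes w :: "nat \<Rightarrow> nat \<Rightarrow> real"
  assumes "\<And>i j. \<bar>w i j\<bar> \<le> W" and "\<And>j. j < N \<Longrightarrow> \<bar>v j\<bar> \<le> R"
  shows "(\<Sum>i<N. \<bar>log_rhs N c k g a w u i - log_rhs N c k g a w v i\<bar>)
    \<le> (\<Sum>i<N. \<bar>g i\<bar> * (\<bar>a i\<bar> * \<bar>c\<bar> * W * (2 + R * \<bar>k\<bar> + N * R * \<bar>k\<bar>) + 1))
        * (\<Sum>j<N. \<bar>u j - v j\<bar>)"
proof -
  let ?S = "\<Sum>j<N. \<bar>u j - v j\<bar>"
  let ?C = "W * (2 + R * \<bar>k\<bar> + N * R * \<bar>k\<bar>)"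
  have "\<bar>log_rhs N c k g a w u i - log_rhs N c k g a w v i\<bar> \<le> \<bar>g i\<bar> * (\<bar>a i\<bar> * \<bar>c\<bar> * ?C + 1) * ?S"
    if "i < N" for i
  proof -
    let ?D = "(\<Sum>j\<in>{..<N} - {i}. w i j * interaction k (u j) (u i))
      - (\<Sum>j\<in>{..<N} - {i}. w i j * interaction k (v j) (v i))"
    have "\<bar>a i * c * ?D\<bar> \<le> \<bar>a i\<bar> * \<bar>c\<bar> * (?C * ?S)"
      unfolding abs_mult using assms that by (intro mult_left_mono interaction_sum_lipschitz) auto
    moreover have "\<bar>u i - v i\<bar> \<le> ?S"
      using that by (intro member_le_sum) auto
    ultimately have bound: "\<bar>- (a i * c * ?D) - (u i - v i)\<bar> \<le> \<bar>a i\<bar> * \<bar>c\<bar> * (?C * ?S) + ?S"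
      using abs_triangle_ineq4[of "- (a i * c * ?D)" "u i - v i"] by simp
    have "log_rhs N c k g a w u i - log_rhs N c k g a w v i = g i * (- (a i * c * ?D) - (u i - v i))"
      unfolding log_rhs_def by (simp add: algebra_simps)
    then have "\<bar>log_rhs N c k g a w u i - log_rhs N c k g a w v i\<bar>
        = \<bar>g i\<bar> * \<bar>- (a i * c * ?D) - (u i - v i)\<bar>"
      by (simp only: abs_mult)
    also have "\<dots> \<le> \<bar>g i\<bar> * (\<bar>a i\<bar> * \<bar>c\<bar> * (?C * ?S) + ?S)"
      using bound by (rule mult_left_mono) simp
    finally show ?thesis
      by (simp add: algebra_simps)
  qed
  then have "(\<Sum>i<N. \<bar>log_rhs N c k g a w u i - log_rhs N c k g a w v i\<bar>)
      \<le> (\<Sum>i<N. \<bar>g i\<bar> * (\<bar>a i\<bar> * \<bar>c\<bar> * ?C + 1) * ?S)"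
    by (intro sum_mono) auto
  then show ?thesis
    by (simp add: sum_distrib_right mult.assoc)
qed

lemma continuous_on_log_rhs:
  assumes "\<And>j. j < N \<Longrightarrow> continuous_on S (P j)" and "i < N"
  shows "continuous_on S (\<lambda>t. log_rhs N c k g a w (\<lambda>j. P j t) i)"
proof -
  have "continuous_on S (\<lambda>t. tanh (k * (P j t - P i t)))" if "j < N" for j
    using assms that
    by (intro continuous_on_tanh continuous_intros) auto
  then show ?thesis
    unfolding log_rhs_def interaction_def using assms
    by (intro continuous_intros continuous_on_sum) auto
qed

lemma affine_growth_system_log_rhs:
  fixes w :: "nat \<Rightarrow> nat \<Rightarrow> real"
  assumes "\<And>i j. \<bar>w i j\<bar> \<le> W"
  shows "affine_growth_system N (log_rhs N c k g a w)
    (\<Sum>i<N. \<bar>g i\<bar> * \<bar>a i\<bar>) (\<Sum>i<N. \<bar>g i\<bar> * (2 * \<bar>a i\<bar> * \<bar>c\<bar> * W + 1))"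
proof unfold_locales
  have "W \<ge> 0"
    using assms[of 0 0] by linarith
  then show "0 \<le> (\<Sum>i<N. \<bar>g i\<bar> * (2 * \<bar>a i\<bar> * \<bar>c\<bar> * W + 1))"
    by (auto intro!: sum_nonneg)
  fix R :: real assume "R \<ge> 0"
  let ?L = "\<Sum>i<N. \<bar>g i\<bar> * (\<bar>a i\<bar> * \<bar>c\<bar> * W * (2 + R * \<bar>k\<bar> + N * R * \<bar>k\<bar>) + 1)"
  show "\<exists>L\<ge>0. \<forall>u v. (\<forall>j<N. \<bar>v j\<bar> \<le> R) \<longrightarrow>
      (\<Sum>i<N. \<bar>log_rhs N c k g a w u i - log_rhs N c k g a w v i\<bar>) \<le> L * (\<Sum>j<N. \<bar>u j - v j\<bar>)"
    using assms \<open>W \<ge> 0\<close> \<open>R \<ge> 0\<close> by (intro exI[of _ ?L]) (auto intro!: log_rhs_lipschitz sum_nonneg)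
qed (use assms in \<open>auto intro: log_rhs_growth continuous_on_log_rhs log_rhs_cong sum_nonneg\<close>)

section \<open>The growth model\<close>

lemma continuous_on_eq_at_right_end:
  fixes f g :: "real \<Rightarrow> real"
  assumes "continuous_on {a..b} f" and "continuous_on {a..b} g" and "a < b"
    and "\<And>\<tau>. \<tau> \<in> {a..<b} \<Longrightarrow> f \<tau> = g \<tau>"
  shows "f b = g b"
proof -
  have "closed {\<tau> \<in> {a..b}. f \<tau> - g \<tau> = 0}"
    using assms(1,2) by (intro continuous_closed_preimage_constant continuous_intros) auto
  moreover have "{a..<b} \<subseteq> {\<tau> \<in> {a..b}. f \<tau> - g \<tau> = 0}"
    using assms(4) by auto
  ultimately have "closure {a..<b} \<subseteq> {\<tau> \<in> {a..b}. f \<tau> - g \<tau> = 0}"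
    by (rule closure_minimal[rotated])
  then show ?thesis
    using \<open>a < b\<close> by (auto simp: subset_iff)
qed

(* At the first time some f j stops being positive, f agrees with g on the preceding interval and
   hence, by continuity, also at that time, where g is positive. *)
lemma positive_if_eq_while_positive:
  fixes f g :: "nat \<Rightarrow> real \<Rightarrow> real"
  assumes f_cont: "\<And>j. j < N \<Longrightarrow> continuous_on {0..} (f j)"
    and g_cont: "\<And>j. j < N \<Longrightarrow> continuous_on {0..} (g j)"
    and g_pos: "\<And>j t. j < N \<Longrightarrow> t \<ge> 0 \<Longrightarrow> g j t > 0"
    and f0_pos: "\<And>j. j < N \<Longrightarrow> f j 0 > 0"
    and eq: "\<And>T j t. (\<And>j \<tau>. j < N \<Longrightarrow> \<tau> \<in> {0..T} \<Longrightarrow> f j \<tau> > 0) \<Longrightarrow> j < N \<Longrightarrow> t \<in> {0..T} \<Longrightarrow>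
      f j t = g j t"
    and "j < N" and "t \<ge> 0"
  shows "f j t > 0"
proof (rule ccontr)
  define Z where "Z = (\<Union>j<N. {\<tau> \<in> {0..}. f j \<tau> \<le> 0})"
  assume "\<not> f j t > 0"
  then have "t \<in> Z"
    using \<open>j < N\<close> \<open>t \<ge> 0\<close> unfolding Z_def by force
  have "closed {\<tau> \<in> {0..}. f j \<tau> \<le> 0}" if "j < N" for j
    by (rule continuous_on_closed_Collect_le[OF f_cont[OF that] continuous_on_const]) simp
  then have "closed Z"
    unfolding Z_def by (intro closed_UN) auto
  moreover have "bdd_below Z"
    unfolding Z_def by (auto intro: bdd_belowI[of _ 0])
  ultimately have "Inf Z \<in> Z"
    using \<open>t \<in> Z\<close> closed_contains_Inf by blast
  then obtain i where "i < N" "Inf Z \<ge> 0" "f i (Inf Z) \<le> 0"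
    unfolding Z_def by auto
  have before: "f j \<tau> > 0" if "j < N" "0 \<le> \<tau>" "\<tau> < Inf Z" for j \<tau>
    using cInf_lower[OF _ \<open>bdd_below Z\<close>, of \<tau>] that unfolding Z_def by force
  have "Inf Z > 0"
    using f0_pos[OF \<open>i < N\<close>] \<open>f i (Inf Z) \<le> 0\<close> \<open>Inf Z \<ge> 0\<close> by (cases "Inf Z = 0") auto
  have "f i (Inf Z) = g i (Inf Z)"
  proof (rule continuous_on_eq_at_right_end[OF _ _ \<open>Inf Z > 0\<close>])
    show "continuous_on {0..Inf Z} (f i)" "continuous_on {0..Inf Z} (g i)"
      using f_cont[OF \<open>i < N\<close>] g_cont[OF \<open>i < N\<close>] by (auto elim!: continuous_on_subset)
    fix \<tau> assume "\<tau> \<in> {0..<Inf Z}"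
    then show "f i \<tau> = g i \<tau>"
      using before \<open>i < N\<close> by (intro eq[of \<tau>]) auto
  qed
  then show False
    using g_pos[OF \<open>i < N\<close> \<open>Inf Z \<ge> 0\<close>] \<open>f i (Inf Z) \<le> 0\<close> by simp
qed

locale growth_model =
  fixes N :: nat and s_m \<sigma>_x \<sigma>_r R_M :: real and x y S \<gamma> s0 :: "nat \<Rightarrow> real"
  assumes s_m_pos: "s_m > 0" and s0_pos: "\<And>i. i < N \<Longrightarrow> s0 i > 0"
begin

definition weight :: "nat \<Rightarrow> nat \<Rightarrow> real" where
  "weight i j = 1 / (2 * R_M * (1 + (dist (x i, y i) (x j, y j))\<^sup>2 / \<sigma>_x\<^sup>2))"

definition log_field :: "(nat \<Rightarrow> real) \<Rightarrow> nat \<Rightarrow> real" where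
  "log_field = log_rhs N (1 / real (N - 1)) (1 / \<sigma>_r) \<gamma> (\<lambda>i. ln (S i / s_m)) weight"

abbreviation solution :: "(nat \<Rightarrow> real \<Rightarrow> real) \<Rightarrow> bool" where
  "solution \<equiv> is_solution N s_m \<sigma>_x \<sigma>_r R_M x y S \<gamma> s0"

lemma abs_weight_le: "\<bar>weight i j\<bar> \<le> \<bar>1 / (2 * R_M)\<bar>"
proof -
  let ?q = "1 + (dist (x i, y i) (x j, y j))\<^sup>2 / \<sigma>_x\<^sup>2"
  have "1 / ?q \<le> 1"
    by (simp add: divide_le_eq_1 add_pos_nonneg)
  then have "\<bar>1 / (2 * R_M)\<bar> * (1 / ?q) \<le> \<bar>1 / (2 * R_M)\<bar>"
    by (rule mult_left_le) simp
  moreover have "weight i j = 1 / (2 * R_M) * (1 / ?q)"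
    unfolding weight_def by simp
  ultimately show ?thesis
    by (simp add: abs_mult)
qed

sublocale log_system: affine_growth_system N log_field
  "\<Sum>i<N. \<bar>\<gamma> i\<bar> * \<bar>ln (S i / s_m)\<bar>"
  "\<Sum>i<N. \<bar>\<gamma> i\<bar> * (2 * \<bar>ln (S i / s_m)\<bar> * \<bar>1 / real (N - 1)\<bar> * \<bar>1 / (2 * R_M)\<bar> + 1)"
  unfolding log_field_def using abs_weight_le by (rule affine_growth_system_log_rhs)

lemma rhs_eq_log_field:
  assumes "i < N" and pos: "\<And>j. j < N \<Longrightarrow> s j > 0"
  shows "rhs N s_m \<sigma>_x \<sigma>_r R_M x y S \<gamma> s i = s i * log_field (\<lambda>j. ln (s j / s_m)) i"
proof -
  have "(\<Sum>j\<in>{..<N} - {i}. interC s_m \<sigma>_x \<sigma>_r R_M (s i) (s j) (dist (x i, y i) (x j, y j)))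
      = (\<Sum>j\<in>{..<N} - {i}. weight i j * interaction (1 / \<sigma>_r) (ln (s j / s_m)) (ln (s i / s_m)))"
  proof (rule sum.cong)
    fix j assume "j \<in> {..<N} - {i}"
    have "ln (s j / s i) = ln (s j / s_m) - ln (s i / s_m)"
      using pos[of i] pos[of j] \<open>j \<in> {..<N} - {i}\<close> \<open>i < N\<close> s_m_pos by (simp add: ln_div)
    then show "interC s_m \<sigma>_x \<sigma>_r R_M (s i) (s j) (dist (x i, y i) (x j, y j))
      = weight i j * interaction (1 / \<sigma>_r) (ln (s j / s_m)) (ln (s i / s_m))"
      unfolding interC_def weight_def interaction_def by simp
  qed simp
  then show ?thesis
    unfolding rhs_def log_field_def log_rhs_def by (simp add: algebra_simps)
qed

lemma solution_exists: "\<exists>s. solution s \<and> (\<forall>i<N. \<forall>t\<ge>0. s i t > 0)"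
proof -
  have "\<exists>U. \<forall>i<N. U i 0 = ln (s0 i / s_m) \<and>
      (\<forall>t\<ge>0. (U i has_real_derivative log_field (\<lambda>j. U j t) i) (at t within {0..}))"
    by (rule log_system.solution_exists)
  then obtain U where U0: "\<And>i. i < N \<Longrightarrow> U i 0 = ln (s0 i / s_m)"
    and U_deriv: "\<And>i t. i < N \<Longrightarrow> t \<ge> 0 \<Longrightarrow>
      (U i has_real_derivative log_field (\<lambda>j. U j t) i) (at t within {0..})"
    by blast
  define s where "s i t = s_m * exp (U i t)" for i t
  have s_pos: "s i t > 0" for i t
    unfolding s_def using s_m_pos by simp
  have "solution s"
    unfolding is_solution_def
  proof (intro conjI allI impI)
    fix i assume "i < N"
    then show "s i 0 = s0 i"
      unfolding s_def using U0 s0_pos s_m_pos by simp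
    fix t :: real assume "t \<ge> 0"
    have "(s i has_real_derivative s i t * log_field (\<lambda>j. U j t) i) (at t within {0..})"
      unfolding s_def by (auto intro!: derivative_eq_intros U_deriv[OF \<open>i < N\<close> \<open>t \<ge> 0\<close>])
    moreover have "s i t * log_field (\<lambda>j. U j t) i = rhs N s_m \<sigma>_x \<sigma>_r R_M x y S \<gamma> (\<lambda>j. s j t) i"
      using rhs_eq_log_field[OF \<open>i < N\<close>, of "\<lambda>j. s j t"] s_pos s_m_pos by (simp add: s_def)
    ultimately show "(s i has_real_derivative rhs N s_m \<sigma>_x \<sigma>_r R_M x y S \<gamma> (\<lambda>j. s j t) i) (at t within {0..})"
      by simp
  qed
  then show ?thesis
    using s_pos by blast
qed

lemma continuous_on_solution: "solution s \<Longrightarrow> j < N \<Longrightarrow> continuous_on {0..} (s j)"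
  unfolding is_solution_def continuous_on_eq_continuous_within by (auto intro: DERIV_continuous)

lemma ln_solution_has_derivative:
  assumes "solution s" and "j < N" and "t \<in> {0..T}"
    and pos: "\<And>i \<tau>. i < N \<Longrightarrow> \<tau> \<in> {0..T} \<Longrightarrow> s i \<tau> > 0"
  shows "((\<lambda>\<tau>. ln (s j \<tau> / s_m)) has_real_derivative log_field (\<lambda>i. ln (s i t / s_m)) j) (at t within {0..T})"
proof -
  have "(s j has_real_derivative rhs N s_m \<sigma>_x \<sigma>_r R_M x y S \<gamma> (\<lambda>i. s i t) j) (at t within {0..})"
    using assms(1-3) unfolding is_solution_def by auto
  then have "(s j has_real_derivative rhs N s_m \<sigma>_x \<sigma>_r R_M x y S \<gamma> (\<lambda>i. s i t) j) (at t within {0..T})"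
    by (rule has_field_derivative_subset) auto
  moreover have "rhs N s_m \<sigma>_x \<sigma>_r R_M x y S \<gamma> (\<lambda>i. s i t) j = s j t * log_field (\<lambda>i. ln (s i t / s_m)) j"
    using assms(2,3) pos by (intro rhs_eq_log_field) auto
  ultimately show ?thesis
    using pos[OF assms(2,3)] s_m_pos by (auto intro!: derivative_eq_intros)
qed

lemma solution_eq_while_positive:
  assumes "solution s" and "solution s'"
    and pos: "\<And>i \<tau>. i < N \<Longrightarrow> \<tau> \<in> {0..T} \<Longrightarrow> s i \<tau> > 0"
    and pos': "\<And>i \<tau>. i < N \<Longrightarrow> \<tau> \<in> {0..T} \<Longrightarrow> s' i \<tau> > 0"
    and "j < N" and "t \<in> {0..T}"
  shows "s' j t = s j t"
proof -
  have "ln (s' j t / s_m) = ln (s j t / s_m)"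
  proof (rule log_system.solution_unique[
        where U = "\<lambda>j \<tau>. ln (s' j \<tau> / s_m)" and V = "\<lambda>j \<tau>. ln (s j \<tau> / s_m)"])
    fix i \<tau> assume "i < N" "\<tau> \<in> {0..T}"
    then show "((\<lambda>\<tau>. ln (s' i \<tau> / s_m)) has_real_derivative log_field (\<lambda>j. ln (s' j \<tau> / s_m)) i)
        (at \<tau> within {0..T})"
      "((\<lambda>\<tau>. ln (s i \<tau> / s_m)) has_real_derivative log_field (\<lambda>j. ln (s j \<tau> / s_m)) i)
        (at \<tau> within {0..T})"
      using ln_solution_has_derivative assms(1,2) pos pos' by blast+
  next
    fix i assume "i < N"
    then show "ln (s' i 0 / s_m) = ln (s i 0 / s_m)"
      using assms(1,2) unfolding is_solution_def by simp
  qed (use assms(5,6) in auto)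
  then show ?thesis
    using pos[OF assms(5,6)] pos'[OF assms(5,6)] s_m_pos by simp
qed

lemma solution_positive:
  assumes "solution s'" and "solution s" and pos: "\<And>i t. i < N \<Longrightarrow> t \<ge> 0 \<Longrightarrow> s i t > 0"
    and "j < N" and "t \<ge> 0"
  shows "s' j t > 0"
proof (rule positive_if_eq_while_positive[where f = s' and g = s])
  fix i assume "i < N"
  then show "s' i 0 > 0"
    using assms(1) s0_pos unfolding is_solution_def by simp
next
  fix T i \<tau>
  assume "\<And>i \<tau>. i < N \<Longrightarrow> \<tau> \<in> {0..T} \<Longrightarrow> s' i \<tau> > 0" and "i < N" and "\<tau> \<in> {0..T}"
  then show "s' i \<tau> = s i \<tau>"
    using pos by (intro solution_eq_while_positive[OF assms(2,1)]) auto
qed (use assms continuous_on_solution in auto)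

end

theorem proposition1:
  fixes N :: nat and s_m \<sigma>_x \<sigma>_r R_M :: real
    and s0 x y S \<gamma> :: "nat \<Rightarrow> real"
  assumes "N \<ge> 2"
    and "s_m > 0" and "\<sigma>_x > 0" and "\<sigma>_r > 0" and "R_M > 0"
    and "\<forall>i<N. s0 i > 0"
    and "\<forall>i<N. S i > 0" and "\<forall>i<N. \<gamma> i > 0"
    and "\<forall>i<N. ln (S i / s_m) \<le> R_M"
  shows "\<exists>s. is_solution N s_m \<sigma>_x \<sigma>_r R_M x y S \<gamma> s0 s
            \<and> (\<forall>s'. is_solution N s_m \<sigma>_x \<sigma>_r R_M x y S \<gamma> s0 s' \<longrightarrow>
                   (\<forall>i<N. \<forall>t\<ge>0. s' i t = s i t))
            \<and> (\<forall>i<N. \<forall>t\<ge>0. s i t > 0)"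
proof -
  interpret growth_model N s_m \<sigma>_x \<sigma>_r R_M x y S \<gamma> s0
    using assms(2,6) by unfold_locales auto
  obtain s where "solution s" and pos: "\<forall>i<N. \<forall>t\<ge>0. s i t > 0"
    using solution_exists by blast
  have "s' i t = s i t" if "solution s'" and "i < N" and "t \<ge> 0" for s' i t
  proof (rule solution_eq_while_positive[OF \<open>solution s\<close> \<open>solution s'\<close>])
    fix j \<tau> assume "j < N" and "\<tau> \<in> {0..t}"
    then show "s j \<tau> > 0" and "s' j \<tau> > 0"
      using pos solution_positive[OF \<open>solution s'\<close> \<open>solution s\<close>] by auto
  qed (use that in auto)
  then show ?thesis
    using \<open>solution s\<close> pos by blast
qed

end
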